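(* Let $\Pi$ be the $3$-regular sinkless and sourceless orientation problem and let $k\ge0$ be an integer. Then, up to renaming of labels, $\mathcal{Q}^k(\Pi)$ has the following constraints. Here $[X\,Y]$ denotes a position that may hold any label from $\{X,Y\}$. - If $k=0$: node constraint $\mathsf B\,\mathsf C\,[\mathsf B\,\mathsf C]$; edge constraint $\mathsf B\,\mathsf C$. - If $k=1$: node constraint $\mathsf B\,\mathsf C\,\mathsf D$; edge constraint $[\mathsf B\,\mathsf D]\,[\mathsf C\,\mathsf D]$. - If $k\ge2$: the label set is $\{\mathsf B,\mathsf C\}\cup\{\mathsf A_i:1\le i\le k-1\}\cup\{\mathsf D_i:1\le i\le k\}$. - The node constraint consists of $\mathsf B\,\mathsf C\,\mathsf D_k$ and $\mathsf A_i\,\mathsf D_i\,\mathsf D_k$ for each $1\le i\le k-1$. - The edge constraint consists of all configurations in $[\mathsf B\,\mathsf D_1\,\dots\,\mathsf D_k]\,[\mathsf C\,\mathsf D_1\,\dots\,\mathsf D_k]$, together with $\mathsf A_i\,\mathsf D_j$ for each $1\le i<j\le k$.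
   Context: Here $\Delta=3$. A node-edge-checkable problem $\Pi=(\Sigma_\Pi,\mathcal{N}_\Pi,\mathcal{E}_\Pi)$ has a finite label set, a node constraint $\mathcal{N}_\Pi$ (a set of cardinality-$3$ multisets over $\Sigma_\Pi$) and an edge constraint $\mathcal{E}_\Pi$ (a set of cardinality-$2$ multisets). The sinkless and sourceless orientation problem has labels $\{\mathsf I,\mathsf O\}$. Its node configurations contain at least one $\mathsf I$ and at least one $\mathsf O$, and its only edge configuration is $\mathsf I\,\mathsf O$. Round elimination. $\mathrm{R}(\Pi)$ is defined as follows. - $\mathcal{E}_{\mathrm{R}(\Pi)}$ consists of the configurations $S_1S_2$ of nonempty subsets of $\Sigma_\Pi$ with $L_1L_2\in\mathcal{E}_\Pi$ for all $L_i\in S_i$ that are maximal. Maximal means no other such configuration $S'_1S'_2$ has $S_i\subseteq S'_{\rho(i)}$ for a permutation $\rho$. - $\Sigma_{\mathrm{R}(\Pi)}$ is the set of sets occurring there. - $\mathcal{N}_{\mathrm{R}(\Pi)}$ consists of the configurations over $\Sigma_{\mathrm{R}(\Pi)}$ admitting a choice in $\mathcal{N}_\Pi$. $\bar{\mathrm{R}}(\Pi)$ is defined dually. - $\mathcal{N}_{\bar{\mathrm{R}}(\Pi)}$ consists of the maximal configurations of nonempty subsets all of whose choices lie in $\mathcal{N}_\Pi$. - $\Sigma_{\bar{\mathrm{R}}(\Pi)}$ is the set of sets occurring there. - $\mathcal{E}_{\bar{\mathrm{R}}(\Pi)}$ consists of the configurations over $\Sigma_{\bar{\mathrm{R}}(\Pi)}$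 admitting a choice in $\mathcal{E}_\Pi$. $\mathcal{Q}=\bar{\mathrm{R}}\circ\mathrm{R}$, and $\mathcal{Q}^k$ is its $k$-fold iterate. *)

theory Defs
  imports Main "HOL-Library.Multiset" "HOL-Library.FSet"
begin

text \<open>A node-edge-checkable problem (Delta = 3): label set, node constraint
 (multisets of size 3), edge constraint (multisets of size 2).\<close>
type_synonym 'a problem = "'a set \<times> 'a multiset set \<times> 'a multiset set"

definition labels :: "'a problem \<Rightarrow> 'a set" where "labels P = fst P"
definition nodeC :: "'a problem \<Rightarrow> 'a multiset set" where "nodeC P = fst (snd P)"
definition edgeC :: "'a problem \<Rightarrow> 'a multiset set" where "edgeC P = snd (snd P)"

definition is_choice :: "'a multiset \<Rightarrow> 'a set multiset \<Rightarrow> bool" where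
  "is_choice L S \<longleftrightarrow> rel_mset (\<lambda>l X. l \<in> X) L S"

definition all_choices_in :: "'a set multiset \<Rightarrow> 'a multiset set \<Rightarrow> bool" where
  "all_choices_in S C \<longleftrightarrow> (\<forall>L. is_choice L S \<longrightarrow> L \<in> C)"

definition some_choice_in :: "'a set multiset \<Rightarrow> 'a multiset set \<Rightarrow> bool" where
  "some_choice_in S C \<longleftrightarrow> (\<exists>L. is_choice L S \<and> L \<in> C)"

definition set_configs :: "nat \<Rightarrow> 'a set \<Rightarrow> 'a set multiset set" where
  "set_configs n \<Sigma> = {S. size S = n \<and> (\<forall>X\<in>#S. X \<noteq> {} \<and> X \<subseteq> \<Sigma>)}"

definition maximal_in :: "'a set multiset set \<Rightarrow> 'a set multiset \<Rightarrow> bool" where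
  "maximal_in Cs S \<longleftrightarrow> S \<in> Cs \<and> (\<forall>S'\<in>Cs. rel_mset (\<subseteq>) S S' \<longrightarrow> S' = S)"

definition RE :: "'a problem \<Rightarrow> 'a set problem" where
  "RE P = (let E' = {S. maximal_in {T \<in> set_configs 2 (labels P). all_choices_in T (edgeC P)} S};
               \<Sigma>' = (\<Union>S\<in>E'. set_mset S);
               N' = {M. size M = 3 \<and> set_mset M \<subseteq> \<Sigma>' \<and> some_choice_in M (nodeC P)}
           in (\<Sigma>', N', E'))"

definition REbar :: "'a problem \<Rightarrow> 'a set problem" where
  "REbar P = (let N' = {S. maximal_in {T \<in> set_configs 3 (labels P). all_choices_in T (nodeC P)} S};
               \<Sigma>' = (\<Union>S\<in>N'. set_mset S);
               E' = {M. size M = 2 \<and> set_mset M \<subseteq> \<Sigma>' \<and> some_choice_in M (edgeC P)}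
           in (\<Sigma>', N', E'))"

definition rename :: "('a \<Rightarrow> 'b) \<Rightarrow> 'a problem \<Rightarrow> 'b problem" where
  "rename f P = (f ` labels P, image_mset f ` nodeC P, image_mset f ` edgeC P)"

text \<open>A universal label type so that Q can be iterated: new labels (finite sets of
 old labels) are encoded injectively as labels again.\<close>
datatype lab = Atom nat | SetL "lab fset"

definition enc :: "lab set \<Rightarrow> lab" where "enc S = SetL (Abs_fset S)"

definition Q :: "lab problem \<Rightarrow> lab problem" where
  "Q P = rename enc (REbar (rename enc (RE P)))"

text \<open>Sinkless and sourceless orientation, I = Atom 0, O = Atom 1.\<close>
definition SSO :: "lab problem" where
  "SSO = ({Atom 0, Atom 1},
          {M. size M = 3 \<and> set_mset M \<subseteq> {Atom 0, Atom 1} \<and> Atom 0 \<in># M \<and> Atom 1 \<in># M},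
          {{#Atom 0, Atom 1#}})"

datatype tlab = TA nat | TB | TC | TD nat

definition target :: "nat \<Rightarrow> tlab problem" where
  "target k = (if k = 0 then
      ({TB, TC}, {{#TB, TC, TB#}, {#TB, TC, TC#}}, {{#TB, TC#}})
    else
      ({TB, TC} \<union> TA ` {1..k-1} \<union> TD ` {1..k},
       {{#TB, TC, TD k#}} \<union> {{#TA i, TD i, TD k#} | i. 1 \<le> i \<and> i \<le> k - 1},
       {{#x, y#} | x y. x \<in> insert TB (TD ` {1..k}) \<and> y \<in> insert TC (TD ` {1..k})}
        \<union> {{#TA i, TD j#} | i j. 1 \<le> i \<and> i < j \<and> j \<le> k}))"

definition iso_problem :: "'a problem \<Rightarrow> 'b problem \<Rightarrow> bool" where
  "iso_problem P T \<longleftrightarrow> (\<exists>f. bij_betw f (labels P) (labels T)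
       \<and> image_mset f ` nodeC P = nodeC T \<and> image_mset f ` edgeC P = edgeC T)"

end

(*
  The theorem follows by induction on k from: Q (target k) equals target (k + 1) up to an
  injective renaming of labels. Round elimination commutes with injective renamings, so the
  encoding of label sets as labels and the renamings accumulated so far can be ignored.

  R (target k) is computed as rproblem k. Its edge configurations are the maximal bicliques
  of the edge relation of target k, namely [B D] [C D] and, for 1 <= j <= k,
  [B C D A_1 .. A_(j-1)] [D_j .. D_k] (D standing for all D_i). Every such set contains D_k,
  so a triple of them has a node choice iff two of them contain B and C, or A_i and D_i.

  In R-bar (rproblem k), a triple of label sets all of whose choices contain a compatible
  pair must contain a compatible biclique; hence the maximal node configurations are the
  maximal bicliques of compatibility completed by the full label set. They correspond to the
  node configurations of target (k + 1), the full set playing the role of D_(k+1).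

  In both steps maximality is proved by exhibiting a family of valid configurations that
  dominates every valid one and in which no set can be enlarged by a further label.
*)

theory Submission
  imports Defs
begin

lemma size_2_cases:
  assumes "size M = 2"
  obtains a b where "M = {#a, b#}"
proof -
  obtain a N where "M = add_mset a N" "size N = 1"
    using size_eq_Suc_imp_eq_union[of M 1] assms by auto
  then show thesis using that size_1_singleton_mset by blast
qed

lemma size_3_cases:
  assumes "size M = 3"
  obtains a b c where "M = {#a, b, c#}"
proof -
  obtain a N where "M = add_mset a N" "size N = 2"
    using size_eq_Suc_imp_eq_union[of M 2] assms by (auto simp: numeral_3_eq_3)
  then show thesis using that size_2_cases by metis
qed

lemma doubleton_mset_eq_iff: "{#a, b#} = {#x, y#} \<longleftrightarrow> a = x \<and> b = y \<or> a = y \<and> b = x"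
  by (auto simp: add_eq_conv_ex)

lemma add_mset_eq_doubleton_iff:
  "add_mset X S = {#A, B#} \<longleftrightarrow> X = A \<and> S = {#B#} \<or> X = B \<and> S = {#A#}"
  by (auto simp: add_eq_conv_ex)

lemma add_mset_eq_triple_iff:
  "add_mset X S = {#A, B, D#} \<longleftrightarrow> X = A \<and> S = {#B, D#} \<or> X = B \<and> S = {#A, D#} \<or> X = D \<and> S = {#A, B#}"
  by (auto simp: add_eq_conv_ex add_mset_commute)

lemma triple_mset_eq_iff:
  "{#a, b, c#} = {#x, y, z#} \<longleftrightarrow>
     a = x \<and> b = y \<and> c = z \<or> a = x \<and> b = z \<and> c = y \<or> a = y \<and> b = x \<and> c = z \<or>
     a = y \<and> b = z \<and> c = x \<or> a = z \<and> b = x \<and> c = y \<or> a = z \<and> b = y \<and> c = x"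
  by (auto simp: add_mset_eq_triple_iff doubleton_mset_eq_iff)

lemma rel_mset_add_mset_right_iff:
  "rel_mset R M (add_mset x N) \<longleftrightarrow> (\<exists>a M'. M = add_mset a M' \<and> R a x \<and> rel_mset R M' N)"
  by (metis msed_rel_invR rel_mset_Plus)

lemma rel_mset_doubletonI: "R a x \<Longrightarrow> R b y \<Longrightarrow> rel_mset R {#a, b#} {#x, y#}"
  by (simp add: rel_mset_Plus rel_mset_Zero)

lemma rel_mset_tripleI: "R a x \<Longrightarrow> R b y \<Longrightarrow> R c z \<Longrightarrow> rel_mset R {#a, b, c#} {#x, y, z#}"
  by (simp add: rel_mset_Plus rel_mset_Zero)

lemma is_choice_doubleton_iff: "is_choice M {#X, Y#} \<longleftrightarrow> (\<exists>x\<in>X. \<exists>y\<in>Y. M = {#x, y#})"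
  unfolding is_choice_def
proof
  assume "rel_mset (\<in>) M {#X, Y#}"
  then show "\<exists>x\<in>X. \<exists>y\<in>Y. M = {#x, y#}" by (auto simp: rel_mset_add_mset_right_iff)
qed (auto intro: rel_mset_doubletonI)

lemma is_choice_triple_iff: "is_choice M {#X, Y, Z#} \<longleftrightarrow> (\<exists>x\<in>X. \<exists>y\<in>Y. \<exists>z\<in>Z. M = {#x, y, z#})"
  unfolding is_choice_def
proof
  assume "rel_mset (\<in>) M {#X, Y, Z#}"
  then show "\<exists>x\<in>X. \<exists>y\<in>Y. \<exists>z\<in>Z. M = {#x, y, z#}" by (auto simp: rel_mset_add_mset_right_iff)
qed (auto intro: rel_mset_tripleI)

lemma all_choices_in_doubleton_iff: "all_choices_in {#X, Y#} C \<longleftrightarrow> (\<forall>x\<in>X. \<forall>y\<in>Y. {#x, y#} \<in> C)"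
  by (auto simp: all_choices_in_def is_choice_doubleton_iff)

lemma all_choices_in_triple_iff:
  "all_choices_in {#X, Y, Z#} C \<longleftrightarrow> (\<forall>x\<in>X. \<forall>y\<in>Y. \<forall>z\<in>Z. {#x, y, z#} \<in> C)"
  by (auto simp: all_choices_in_def is_choice_triple_iff)

lemma some_choice_in_doubleton_iff: "some_choice_in {#X, Y#} C \<longleftrightarrow> (\<exists>x\<in>X. \<exists>y\<in>Y. {#x, y#} \<in> C)"
  by (auto simp: some_choice_in_def is_choice_doubleton_iff)

lemma some_choice_in_triple_iff:
  "some_choice_in {#X, Y, Z#} C \<longleftrightarrow> (\<exists>x\<in>X. \<exists>y\<in>Y. \<exists>z\<in>Z. {#x, y, z#} \<in> C)"
  by (auto simp: some_choice_in_def is_choice_triple_iff)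

lemma is_choice_mono:
  assumes "is_choice M S" and "rel_mset (\<subseteq>) S T"
  shows "is_choice M T"
proof -
  have "rel_mset ((\<lambda>l X. l \<in> X) OO (\<subseteq>)) M T"
    using assms unfolding is_choice_def multiset.rel_compp by blast
  then show ?thesis
    unfolding is_choice_def by (rule multiset.rel_mono_strong) auto
qed

lemma all_choices_in_mono: "rel_mset (\<subseteq>) S T \<Longrightarrow> all_choices_in T C \<Longrightarrow> all_choices_in S C"
  unfolding all_choices_in_def using is_choice_mono by blast

lemma is_choice_subset: "is_choice M S \<Longrightarrow> set_mset M \<subseteq> \<Union> (set_mset S)"
  unfolding is_choice_def multiset.rel_compp_Grp Grp_def by force

lemma rel_mset_eq_image_iff: "rel_mset (\<lambda>x y. x = f y) M N \<longleftrightarrow> M = image_mset f N"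
  using multiset.rel_map(2)[of "(=)" M f N] by (simp add: multiset.rel_eq)

lemma is_choice_image:
  "is_choice M (image_mset (image f) S) \<longleftrightarrow> (\<exists>M0. M = image_mset f M0 \<and> is_choice M0 S)"
proof -
  have "rel_mset (\<lambda>l X. l \<in> f ` X) M S \<longleftrightarrow> rel_mset ((\<lambda>l x. l = f x) OO (\<lambda>l X. l \<in> X)) M S"
    by (rule arg_cong[where f = "\<lambda>R. rel_mset R M S"]) blast
  also have "\<dots> \<longleftrightarrow> (\<exists>M0. rel_mset (\<lambda>l x. l = f x) M M0 \<and> rel_mset (\<lambda>l X. l \<in> X) M0 S)"
    by (simp add: multiset.rel_compp relcompp_apply)
  finally show ?thesis
    unfolding is_choice_def multiset.rel_map rel_mset_eq_image_iff .
qed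

lemma image_mset_inv_into_cancel:
  "inj_on f A \<Longrightarrow> set_mset M \<subseteq> A \<Longrightarrow> image_mset (inv_into A f) (image_mset f M) = M"
  by (induction M) (auto simp: inv_into_f_f)

lemma inj_on_image_mset: "inj_on f A \<Longrightarrow> inj_on (image_mset f) {M. set_mset M \<subseteq> A}"
  by (rule inj_on_inverseI[where g = "image_mset (inv_into A f)"])
    (simp add: image_mset_inv_into_cancel)

lemma image_mset_in_image_iff:
  assumes "inj_on f A" "\<forall>N\<in>C. set_mset N \<subseteq> A" "set_mset M \<subseteq> A"
  shows "image_mset f M \<in> image_mset f ` C \<longleftrightarrow> M \<in> C"
  using inj_on_image_mem_iff[OF inj_on_image_mset[OF assms(1)]] assms(2,3) by blast

lemma set_mset_subset_imageE:
  assumes "set_mset M \<subseteq> f ` A"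
  obtains M0 where "set_mset M0 \<subseteq> A" "M = image_mset f M0"
proof
  show "set_mset (image_mset (inv_into A f) M) \<subseteq> A"
    using assms by (auto intro: inv_into_into)
  show "M = image_mset f (image_mset (inv_into A f) M)"
    using assms by (induction M) (auto simp: f_inv_into_f)
qed

lemma inj_on_image_subset_iff:
  assumes "inj_on f A" "X \<subseteq> A" "Y \<subseteq> A"
  shows "f ` X \<subseteq> f ` Y \<longleftrightarrow> X \<subseteq> Y"
  using inj_on_image_mem_iff[OF assms(1) _ assms(3)] assms(2) by blast

lemma all_choices_in_image:
  assumes f: "inj_on f L" and C: "\<forall>M\<in>C. set_mset M \<subseteq> L" and S: "\<forall>X\<in>#S. X \<subseteq> L"
  shows "all_choices_in (image_mset (image f) S) (image_mset f ` C) \<longleftrightarrow> all_choices_in S C"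
proof -
  have "image_mset f M \<in> image_mset f ` C \<longleftrightarrow> M \<in> C" if "is_choice M S" for M
    using is_choice_subset[OF that] S image_mset_in_image_iff[OF f C] by blast
  then show ?thesis unfolding all_choices_in_def is_choice_image by blast
qed

lemma some_choice_in_image:
  assumes f: "inj_on f L" and C: "\<forall>M\<in>C. set_mset M \<subseteq> L" and S: "\<forall>X\<in>#S. X \<subseteq> L"
  shows "some_choice_in (image_mset (image f) S) (image_mset f ` C) \<longleftrightarrow> some_choice_in S C"
proof -
  have "image_mset f M \<in> image_mset f ` C \<longleftrightarrow> M \<in> C" if "is_choice M S" for M
    using is_choice_subset[OF that] S image_mset_in_image_iff[OF f C] by blast
  then show ?thesis unfolding some_choice_in_def is_choice_image by blast
qed

lemma set_configs_image:
  assumes "inj_on f L"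
  shows "set_configs n (f ` L) = image_mset (image f) ` set_configs n L"
proof (intro set_eqI iffI)
  fix T assume T: "T \<in> set_configs n (f ` L)"
  have "set_mset T \<subseteq> image f ` {X. X \<noteq> {} \<and> X \<subseteq> L}"
  proof
    fix X assume "X \<in># T"
    then have "X \<noteq> {}" "X \<subseteq> f ` L" using T unfolding set_configs_def by auto
    then show "X \<in> image f ` {X. X \<noteq> {} \<and> X \<subseteq> L}"
      by (intro image_eqI[where x = "L \<inter> f -` X"]) auto
  qed
  then obtain T0 where T0: "set_mset T0 \<subseteq> {X. X \<noteq> {} \<and> X \<subseteq> L}" "T = image_mset (image f) T0"
    by (rule set_mset_subset_imageE)
  then have "T0 \<in> set_configs n L"
    using T unfolding set_configs_def by auto
  then show "T \<in> image_mset (image f) ` set_configs n L"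
    using T0(2) by blast
next
  fix T assume "T \<in> image_mset (image f) ` set_configs n L"
  then obtain T0 where "T0 \<in> set_configs n L" "T = image_mset (image f) T0"
    by blast
  then show "T \<in> set_configs n (f ` L)"
    unfolding set_configs_def by auto
qed

lemma maximal_in_image:
  assumes mono: "\<And>S T. S \<in> G \<Longrightarrow> T \<in> G \<Longrightarrow> rel_mset (\<subseteq>) (H S) (H T) \<longleftrightarrow> rel_mset (\<subseteq>) S T"
    and inj: "inj_on H G"
  shows "{S. maximal_in (H ` G) S} = H ` {S. maximal_in G S}"
  unfolding maximal_in_def using mono inj_onD[OF inj] by fast

lemma rel_mset_subset_image_iff:
  assumes "inj_on f L" "\<forall>X\<in>#S. X \<subseteq> L" "\<forall>Y\<in>#T. Y \<subseteq> L"
  shows "rel_mset (\<subseteq>) (image_mset (image f) S) (image_mset (image f) T) \<longleftrightarrow> rel_mset (\<subseteq>) S T"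
proof -
  have "rel_mset (\<lambda>X Y. f ` X \<subseteq> f ` Y) S T \<longleftrightarrow> rel_mset (\<subseteq>) S T"
    using assms(2,3) inj_on_image_subset_iff[OF assms(1)]
    by (auto elim!: multiset.rel_mono_strong)
  then show ?thesis by (simp add: multiset.rel_map)
qed

section \<open>Round elimination commutes with injective renaming\<close>

definition all_choice_configs :: "nat \<Rightarrow> 'a set \<Rightarrow> 'a multiset set \<Rightarrow> 'a set multiset set" where
  "all_choice_configs n L C = {T \<in> set_configs n L. all_choices_in T C}"

definition maximal_configs :: "nat \<Rightarrow> 'a set \<Rightarrow> 'a multiset set \<Rightarrow> 'a set multiset set" where
  "maximal_configs n L C = {S. maximal_in (all_choice_configs n L C) S}"

definition some_choice_configs :: "nat \<Rightarrow> 'a set set \<Rightarrow> 'a multiset set \<Rightarrow> 'a set multiset set" where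
  "some_choice_configs n \<Sigma> C = {M. size M = n \<and> set_mset M \<subseteq> \<Sigma> \<and> some_choice_in M C}"

lemma all_choice_configs_image:
  assumes "inj_on f L" "\<forall>M\<in>C. set_mset M \<subseteq> L"
  shows "all_choice_configs n (f ` L) (image_mset f ` C) =
    image_mset (image f) ` all_choice_configs n L C"
proof -
  have "all_choices_in (image_mset (image f) T) (image_mset f ` C) \<longleftrightarrow> all_choices_in T C"
    if "T \<in> set_configs n L" for T
    using that all_choices_in_image[OF assms] by (auto simp: set_configs_def)
  then show ?thesis
    unfolding all_choice_configs_def set_configs_image[OF assms(1)] by blast
qed

lemma maximal_configs_image:
  assumes "inj_on f L" "\<forall>M\<in>C. set_mset M \<subseteq> L"
  shows "maximal_configs n (f ` L) (image_mset f ` C) =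
    image_mset (image f) ` maximal_configs n L C"
proof -
  have sub: "\<forall>X\<in>#T. X \<subseteq> L" if "T \<in> all_choice_configs n L C" for T
    using that by (auto simp: all_choice_configs_def set_configs_def)
  have "inj_on (image_mset (image f)) (all_choice_configs n L C)"
    by (rule inj_on_subset[OF inj_on_image_mset[OF inj_on_image_Pow[OF assms(1)]]])
      (use sub in auto)
  then show ?thesis
    unfolding maximal_configs_def all_choice_configs_image[OF assms]
    using rel_mset_subset_image_iff[OF assms(1) sub sub] by (rule maximal_in_image[rotated])
qed

lemma some_choice_configs_image:
  assumes "inj_on f L" "\<forall>M\<in>C. set_mset M \<subseteq> L" "\<Sigma> \<subseteq> Pow L"
  shows "some_choice_configs n (image f ` \<Sigma>) (image_mset f ` C) =
    image_mset (image f) ` some_choice_configs n \<Sigma> C"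
proof -
  have choice: "some_choice_in (image_mset (image f) M) (image_mset f ` C) \<longleftrightarrow> some_choice_in M C"
    if "set_mset M \<subseteq> \<Sigma>" for M
    using some_choice_in_image[OF assms(1,2)] that assms(3) by blast
  show ?thesis
  proof (intro set_eqI iffI)
    fix M assume M: "M \<in> some_choice_configs n (image f ` \<Sigma>) (image_mset f ` C)"
    then obtain M0 where M0: "set_mset M0 \<subseteq> \<Sigma>" "M = image_mset (image f) M0"
      by (auto simp: some_choice_configs_def elim: set_mset_subset_imageE)
    then show "M \<in> image_mset (image f) ` some_choice_configs n \<Sigma> C"
      using M choice[OF M0(1)] by (auto simp: some_choice_configs_def)
  next
    fix M assume "M \<in> image_mset (image f) ` some_choice_configs n \<Sigma> C"
    then obtain M0 where "M0 \<in> some_choice_configs n \<Sigma> C" "M = image_mset (image f) M0"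
      by blast
    then show "M \<in> some_choice_configs n (image f ` \<Sigma>) (image_mset f ` C)"
      using choice by (auto simp: some_choice_configs_def)
  qed
qed

lemma labels_rename [simp]: "labels (rename f P) = f ` labels P"
  and nodeC_rename [simp]: "nodeC (rename f P) = image_mset f ` nodeC P"
  and edgeC_rename [simp]: "edgeC (rename f P) = image_mset f ` edgeC P"
  by (simp_all add: rename_def labels_def nodeC_def edgeC_def)

lemma problem_eqI: "labels P = labels T \<Longrightarrow> nodeC P = nodeC T \<Longrightarrow> edgeC P = edgeC T \<Longrightarrow> P = T"
  by (simp add: labels_def nodeC_def edgeC_def prod_eq_iff)

lemma rename_comp: "rename g (rename f P) = rename (g \<circ> f) P"
  by (rule problem_eqI) (auto simp: image_image multiset.map_comp)

definition wf_problem :: "'a problem \<Rightarrow> bool" where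
  "wf_problem P \<longleftrightarrow> (\<forall>M \<in> nodeC P \<union> edgeC P. set_mset M \<subseteq> labels P)"

lemma labels_RE: "labels (RE P) = (\<Union>S\<in>edgeC (RE P). set_mset S)"
  and nodeC_RE: "nodeC (RE P) = some_choice_configs 3 (labels (RE P)) (nodeC P)"
  and edgeC_RE: "edgeC (RE P) = maximal_configs 2 (labels P) (edgeC P)"
  by (simp_all add: RE_def Let_def labels_def nodeC_def edgeC_def some_choice_configs_def
      maximal_configs_def all_choice_configs_def)

lemma labels_REbar: "labels (REbar P) = (\<Union>S\<in>nodeC (REbar P). set_mset S)"
  and nodeC_REbar: "nodeC (REbar P) = maximal_configs 3 (labels P) (nodeC P)"
  and edgeC_REbar: "edgeC (REbar P) = some_choice_configs 2 (labels (REbar P)) (edgeC P)"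
  by (simp_all add: REbar_def Let_def labels_def nodeC_def edgeC_def some_choice_configs_def
      maximal_configs_def all_choice_configs_def)

lemma labels_RE_subset_Pow: "labels (RE P) \<subseteq> Pow (labels P)"
  by (auto simp: labels_RE edgeC_RE maximal_configs_def maximal_in_def all_choice_configs_def
      set_configs_def)

lemma labels_REbar_subset_Pow: "labels (REbar P) \<subseteq> Pow (labels P)"
  by (auto simp: labels_REbar nodeC_REbar maximal_configs_def maximal_in_def all_choice_configs_def
      set_configs_def)

lemma RE_rename:
  assumes wf: "wf_problem P" and f: "inj_on f (labels P)"
  shows "RE (rename f P) = rename (image f) (RE P)"
proof -
  have N: "\<forall>M\<in>nodeC P. set_mset M \<subseteq> labels P" and E: "\<forall>M\<in>edgeC P. set_mset M \<subseteq> labels P"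
    using wf by (auto simp: wf_problem_def)
  have edges: "edgeC (RE (rename f P)) = image_mset (image f) ` edgeC (RE P)"
    using maximal_configs_image[OF f E] by (simp add: edgeC_RE)
  then have labels: "labels (RE (rename f P)) = image f ` labels (RE P)"
    by (simp add: labels_RE[of "rename f P"] labels_RE[of P] image_UN)
  have "nodeC (RE (rename f P)) = image_mset (image f) ` nodeC (RE P)"
    using some_choice_configs_image[OF f N labels_RE_subset_Pow]
    by (simp add: nodeC_RE labels)
  with edges labels show ?thesis by (intro problem_eqI) simp_all
qed

lemma REbar_rename:
  assumes wf: "wf_problem P" and f: "inj_on f (labels P)"
  shows "REbar (rename f P) = rename (image f) (REbar P)"
proof -
  have N: "\<forall>M\<in>nodeC P. set_mset M \<subseteq> labels P" and E: "\<forall>M\<in>edgeC P. set_mset M \<subseteq> labels P"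
    using wf by (auto simp: wf_problem_def)
  have nodes: "nodeC (REbar (rename f P)) = image_mset (image f) ` nodeC (REbar P)"
    using maximal_configs_image[OF f N] by (simp add: nodeC_REbar)
  then have labels: "labels (REbar (rename f P)) = image f ` labels (REbar P)"
    by (simp add: labels_REbar[of "rename f P"] labels_REbar[of P] image_UN)
  have "edgeC (REbar (rename f P)) = image_mset (image f) ` edgeC (REbar P)"
    using some_choice_configs_image[OF f E labels_REbar_subset_Pow]
    by (simp add: edgeC_REbar labels)
  with nodes labels show ?thesis by (intro problem_eqI) simp_all
qed

section \<open>Maximal configurations\<close>

definition biclique :: "('a \<Rightarrow> 'b \<Rightarrow> bool) \<Rightarrow> 'a set \<Rightarrow> 'b set \<Rightarrow> bool" where
  "biclique R X Y \<longleftrightarrow> (\<forall>x\<in>X. \<forall>y\<in>Y. R x y)"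

lemma add_mset_singleton_in_set_configs:
  "add_mset X S \<in> set_configs n L \<Longrightarrow> y \<in> L \<Longrightarrow> add_mset {y} S \<in> set_configs n L"
  by (simp add: set_configs_def)

lemma closed_config_eq:
  assumes closed: "\<And>X S' x. S = add_mset X S' \<Longrightarrow> add_mset {x} S' \<in> all_choice_configs n L C \<Longrightarrow> x \<in> X"
    and S: "S \<in> all_choice_configs n L C" and T: "T \<in> all_choice_configs n L C"
    and le: "rel_mset (\<subseteq>) S T"
  shows "T = S"
proof -
  obtain K where K: "image_mset fst K = S" "image_mset snd K = T" "\<forall>(X, Y)\<in>#K. X \<subseteq> Y"
    using le unfolding multiset.rel_compp_Grp Grp_def by auto
  have "X = Y" if XY: "(X, Y) \<in># K" for X Y
  proof
    show "X \<subseteq> Y" using K(3) XY by auto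
    obtain K' where K': "K = add_mset (X, Y) K'" using multi_member_split[OF XY] by blast
    have S_eq: "S = add_mset X (image_mset fst K')" and T_eq: "T = add_mset Y (image_mset snd K')"
      using K(1,2) K' by auto
    have rest: "rel_mset (\<subseteq>) (image_mset fst K') (image_mset snd K')"
      using K(3) K' by (auto simp: multiset.rel_map split_beta intro!: multiset.rel_refl_strong)
    show "Y \<subseteq> X"
    proof
      fix y assume "y \<in> Y"
      then have "rel_mset (\<subseteq>) (add_mset {y} (image_mset fst K')) T"
        unfolding T_eq using rest by (auto intro: rel_mset_Plus)
      then have "all_choices_in (add_mset {y} (image_mset fst K')) C"
        using T all_choices_in_mono by (auto simp: all_choice_configs_def)
      moreover have "y \<in> L"
        using T \<open>y \<in> Y\<close> unfolding T_eq by (auto simp: all_choice_configs_def set_configs_def)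
      moreover have "add_mset X (image_mset fst K') \<in> set_configs n L"
        using S by (simp add: S_eq all_choice_configs_def)
      ultimately have "add_mset {y} (image_mset fst K') \<in> all_choice_configs n L C"
        by (simp add: all_choice_configs_def add_mset_singleton_in_set_configs)
      then show "y \<in> X" by (rule closed[OF S_eq])
    qed
  qed
  then have "image_mset fst K = image_mset snd K"
    by (intro image_mset_cong) (metis prod.collapse)
  with K(1,2) show ?thesis by simp
qed

lemma maximal_configs_eqI:
  assumes valid: "PR \<subseteq> all_choice_configs n L C"
    and closed: "\<And>S X S' x. S \<in> PR \<Longrightarrow> S = add_mset X S' \<Longrightarrow>
      add_mset {x} S' \<in> all_choice_configs n L C \<Longrightarrow> x \<in> X"
    and dominated: "\<And>T. T \<in> all_choice_configs n L C \<Longrightarrow> \<exists>S\<in>PR. rel_mset (\<subseteq>) T S"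
  shows "maximal_configs n L C = PR"
proof (intro set_eqI iffI)
  fix S assume "S \<in> maximal_configs n L C"
  then have S: "S \<in> all_choice_configs n L C"
    and max: "\<And>T. T \<in> all_choice_configs n L C \<Longrightarrow> rel_mset (\<subseteq>) S T \<Longrightarrow> T = S"
    by (auto simp: maximal_configs_def maximal_in_def)
  obtain S' where "S' \<in> PR" "rel_mset (\<subseteq>) S S'" using dominated[OF S] by blast
  with max valid show "S \<in> PR" by auto
next
  fix S assume S: "S \<in> PR"
  have "T = S" if "T \<in> all_choice_configs n L C" "rel_mset (\<subseteq>) S T" for T
    using closed[OF S] S valid that by (intro closed_config_eq) auto
  then show "S \<in> maximal_configs n L C"
    using S valid by (auto simp: maximal_configs_def maximal_in_def)
qed

lemma doubleton_in_all_choice_configs_iff: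
  assumes "\<And>x y. x \<in> L \<Longrightarrow> y \<in> L \<Longrightarrow> {#x, y#} \<in> C \<longleftrightarrow> R x y"
  shows "{#X, Y#} \<in> all_choice_configs 2 L C \<longleftrightarrow>
    X \<noteq> {} \<and> Y \<noteq> {} \<and> X \<subseteq> L \<and> Y \<subseteq> L \<and> biclique R X Y"
  using assms
  by (auto simp: all_choice_configs_def set_configs_def all_choices_in_doubleton_iff biclique_def
      subset_iff)

lemma triple_in_all_choice_configs_iff:
  assumes "\<And>x y z. x \<in> L \<Longrightarrow> y \<in> L \<Longrightarrow> z \<in> L \<Longrightarrow> {#x, y, z#} \<in> C \<longleftrightarrow> N x y z"
  shows "{#X, Y, Z#} \<in> all_choice_configs 3 L C \<longleftrightarrow>
    X \<noteq> {} \<and> Y \<noteq> {} \<and> Z \<noteq> {} \<and> X \<subseteq> L \<and> Y \<subseteq> L \<and> Z \<subseteq> L \<and> (\<forall>x\<in>X. \<forall>y\<in>Y. \<forall>z\<in>Z. N x y z)"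
  using assms
  by (auto simp: all_choice_configs_def set_configs_def all_choices_in_triple_iff subset_iff)

lemma maximal_configs_2_eqI:
  assumes C: "\<And>x y. x \<in> L \<Longrightarrow> y \<in> L \<Longrightarrow> {#x, y#} \<in> C \<longleftrightarrow> R x y"
    and valid: "\<And>A B. (A, B) \<in> PR \<Longrightarrow> A \<noteq> {} \<and> B \<noteq> {} \<and> A \<subseteq> L \<and> B \<subseteq> L \<and> biclique R A B"
    and closed_fst: "\<And>A B x. (A, B) \<in> PR \<Longrightarrow> x \<in> L \<Longrightarrow> biclique R {x} B \<Longrightarrow> x \<in> A"
    and closed_snd: "\<And>A B y. (A, B) \<in> PR \<Longrightarrow> y \<in> L \<Longrightarrow> biclique R A {y} \<Longrightarrow> y \<in> B"
    and dominated: "\<And>X Y. X \<noteq> {} \<Longrightarrow> Y \<noteq> {} \<Longrightarrow> X \<subseteq> L \<Longrightarrow> Y \<subseteq> L \<Longrightarrow> biclique R X Y \<Longrightarrow>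
      \<exists>(A, B)\<in>PR. X \<subseteq> A \<and> Y \<subseteq> B \<or> X \<subseteq> B \<and> Y \<subseteq> A"
  shows "maximal_configs 2 L C = (\<lambda>(A, B). {#A, B#}) ` PR"
proof -
  have config: "{#X, Y#} \<in> all_choice_configs 2 L C \<longleftrightarrow>
      X \<noteq> {} \<and> Y \<noteq> {} \<and> X \<subseteq> L \<and> Y \<subseteq> L \<and> biclique R X Y" for X Y
    by (rule doubleton_in_all_choice_configs_iff[OF C])
  show ?thesis
  proof (rule maximal_configs_eqI)
    show "(\<lambda>(A, B). {#A, B#}) ` PR \<subseteq> all_choice_configs 2 L C"
      using valid config by auto
  next
    fix S X S' x
    assume "S \<in> (\<lambda>(A, B). {#A, B#}) ` PR" "S = add_mset X S'"
      and x: "add_mset {x} S' \<in> all_choice_configs 2 L C"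
    then obtain A B where AB: "(A, B) \<in> PR" "add_mset X S' = {#A, B#}" by auto
    then consider "X = A" "S' = {#B#}" | "X = B" "S' = {#A#}"
      unfolding add_mset_eq_doubleton_iff by blast
    then show "x \<in> X"
    proof cases
      case 1
      then have "{#{x}, B#} \<in> all_choice_configs 2 L C" using x by simp
      then have "x \<in> L" "biclique R {x} B" unfolding config by auto
      then show ?thesis using closed_fst[OF AB(1)] 1 by simp
    next
      case 2
      then have "{#A, {x}#} \<in> all_choice_configs 2 L C" using x by (metis add_mset_commute)
      then have "x \<in> L" "biclique R A {x}" unfolding config by auto
      then show ?thesis using closed_snd[OF AB(1)] 2 by simp
    qed
  next
    fix T assume T: "T \<in> all_choice_configs 2 L C"
    then obtain X Y where XY: "T = {#X, Y#}"
      by (auto simp: all_choice_configs_def set_configs_def elim: size_2_cases)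
    have "\<exists>(A, B)\<in>PR. X \<subseteq> A \<and> Y \<subseteq> B \<or> X \<subseteq> B \<and> Y \<subseteq> A"
      using T unfolding XY config by (elim conjE) (rule dominated)
    then obtain A B where "(A, B) \<in> PR" "X \<subseteq> A \<and> Y \<subseteq> B \<or> X \<subseteq> B \<and> Y \<subseteq> A"
      by blast
    then show "\<exists>S\<in>(\<lambda>(A, B). {#A, B#}) ` PR. rel_mset (\<subseteq>) T S"
      unfolding XY
      by (metis (no_types, lifting) add_mset_commute case_prod_conv image_eqI rel_mset_doubletonI)
  qed
qed

lemma maximal_configs_3_eqI:
  assumes C: "\<And>x y z. x \<in> L \<Longrightarrow> y \<in> L \<Longrightarrow> z \<in> L \<Longrightarrow> {#x, y, z#} \<in> C \<longleftrightarrow> N x y z"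
    and valid: "\<And>A B D. (A, B, D) \<in> PR \<Longrightarrow> A \<noteq> {} \<and> B \<noteq> {} \<and> D \<noteq> {} \<and> A \<subseteq> L \<and> B \<subseteq> L \<and> D \<subseteq> L
      \<and> (\<forall>x\<in>A. \<forall>y\<in>B. \<forall>z\<in>D. N x y z)"
    and closed1: "\<And>A B D x. (A, B, D) \<in> PR \<Longrightarrow> x \<in> L \<Longrightarrow> \<forall>y\<in>B. \<forall>z\<in>D. N x y z \<Longrightarrow> x \<in> A"
    and closed2: "\<And>A B D y. (A, B, D) \<in> PR \<Longrightarrow> y \<in> L \<Longrightarrow> \<forall>x\<in>A. \<forall>z\<in>D. N x y z \<Longrightarrow> y \<in> B"
    and closed3: "\<And>A B D z. (A, B, D) \<in> PR \<Longrightarrow> z \<in> L \<Longrightarrow> \<forall>x\<in>A. \<forall>y\<in>B. N x y z \<Longrightarrow> z \<in> D"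
    and dominated: "\<And>X Y Z. X \<noteq> {} \<Longrightarrow> Y \<noteq> {} \<Longrightarrow> Z \<noteq> {} \<Longrightarrow> X \<subseteq> L \<Longrightarrow> Y \<subseteq> L \<Longrightarrow> Z \<subseteq> L \<Longrightarrow>
      \<forall>x\<in>X. \<forall>y\<in>Y. \<forall>z\<in>Z. N x y z \<Longrightarrow> \<exists>(A, B, D)\<in>PR. rel_mset (\<subseteq>) {#X, Y, Z#} {#A, B, D#}"
  shows "maximal_configs 3 L C = (\<lambda>(A, B, D). {#A, B, D#}) ` PR"
proof -
  have config: "{#X, Y, Z#} \<in> all_choice_configs 3 L C \<longleftrightarrow>
      X \<noteq> {} \<and> Y \<noteq> {} \<and> Z \<noteq> {} \<and> X \<subseteq> L \<and> Y \<subseteq> L \<and> Z \<subseteq> L \<and> (\<forall>x\<in>X. \<forall>y\<in>Y. \<forall>z\<in>Z. N x y z)"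
    for X Y Z
    by (rule triple_in_all_choice_configs_iff[OF C])
  show ?thesis
  proof (rule maximal_configs_eqI)
    show "(\<lambda>(A, B, D). {#A, B, D#}) ` PR \<subseteq> all_choice_configs 3 L C"
      using valid config by auto
  next
    fix S X S' x
    assume "S \<in> (\<lambda>(A, B, D). {#A, B, D#}) ` PR" "S = add_mset X S'"
      and x: "add_mset {x} S' \<in> all_choice_configs 3 L C"
    then obtain A B D where ABD: "(A, B, D) \<in> PR" "add_mset X S' = {#A, B, D#}" by auto
    then consider "X = A" "S' = {#B, D#}" | "X = B" "S' = {#A, D#}" | "X = D" "S' = {#A, B#}"
      unfolding add_mset_eq_triple_iff by blast
    then show "x \<in> X"
    proof cases
      case 1
      then have "{#{x}, B, D#} \<in> all_choice_configs 3 L C" using x by simp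
      then have "x \<in> L" "\<forall>y\<in>B. \<forall>z\<in>D. N x y z" unfolding config by auto
      then show ?thesis using closed1[OF ABD(1)] 1 by simp
    next
      case 2
      then have "{#A, {x}, D#} \<in> all_choice_configs 3 L C" using x by (metis add_mset_commute)
      then have "x \<in> L" "\<forall>a\<in>A. \<forall>z\<in>D. N a x z" unfolding config by auto
      then show ?thesis using closed2[OF ABD(1)] 2 by simp
    next
      case 3
      then have "{#A, B, {x}#} \<in> all_choice_configs 3 L C" using x by (metis add_mset_commute)
      then have "x \<in> L" "\<forall>a\<in>A. \<forall>b\<in>B. N a b x" unfolding config by auto
      then show ?thesis using closed3[OF ABD(1)] 3 by simp
    qed
  next
    fix T assume T: "T \<in> all_choice_configs 3 L C"
    then obtain X Y Z where XYZ: "T = {#X, Y, Z#}"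
      by (auto simp: all_choice_configs_def set_configs_def elim: size_3_cases)
    have "\<exists>(A, B, D)\<in>PR. rel_mset (\<subseteq>) {#X, Y, Z#} {#A, B, D#}"
      using T unfolding XYZ config by (elim conjE) (rule dominated)
    then show "\<exists>S\<in>(\<lambda>(A, B, D). {#A, B, D#}) ` PR. rel_mset (\<subseteq>) T S"
      unfolding XYZ by force
  qed
qed

section \<open>The problem R (target k)\<close>

(* rproblem k is R (target k) up to renaming: its label a stands for the set rset k a of
   labels of target k. Dually, the label a of target (k + 1) stands for the set tset k a of
   labels of rproblem k. *)
datatype rlab = RB | RC | RY nat | RZ nat

definition rlabels :: "nat \<Rightarrow> rlab set" where
  "rlabels k = {RB, RC} \<union> RY ` {1..k} \<union> RZ ` {1..k}"

(* Compatible labels: one set contains B and the other C, or one A_i and the other D_i. *)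
fun rcompat :: "rlab \<Rightarrow> rlab \<Rightarrow> bool" where
  "rcompat RB RC \<longleftrightarrow> True"
| "rcompat RC RB \<longleftrightarrow> True"
| "rcompat RB (RY m) \<longleftrightarrow> True"
| "rcompat (RY m) RB \<longleftrightarrow> True"
| "rcompat RC (RY m) \<longleftrightarrow> True"
| "rcompat (RY m) RC \<longleftrightarrow> True"
| "rcompat (RY m) (RY n) \<longleftrightarrow> True"
| "rcompat (RY m) (RZ j) \<longleftrightarrow> j < m"
| "rcompat (RZ j) (RY m) \<longleftrightarrow> j < m"
| "rcompat _ _ \<longleftrightarrow> False"

definition redges :: "nat \<Rightarrow> (rlab \<times> rlab) set" where
  "redges k = insert (RB, RC) ((\<lambda>j. (RY j, RZ j)) ` {1..k})"

definition rproblem :: "nat \<Rightarrow> rlab problem" where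
  "rproblem k = (rlabels k,
     {{#a, b, c#} | a b c. a \<in> rlabels k \<and> b \<in> rlabels k \<and> c \<in> rlabels k
        \<and> (rcompat a b \<or> rcompat a c \<or> rcompat b c)},
     (\<lambda>(a, b). {#a, b#}) ` redges k)"

fun rset :: "nat \<Rightarrow> rlab \<Rightarrow> tlab set" where
  "rset k RB = insert TB (TD ` {1..k})"
| "rset k RC = insert TC (TD ` {1..k})"
| "rset k (RY j) = {TB, TC} \<union> TD ` {1..k} \<union> TA ` {1..<j}"
| "rset k (RZ j) = TD ` {j..k}"

fun tset :: "nat \<Rightarrow> tlab \<Rightarrow> rlab set" where
  "tset k TB = insert RB (RY ` {1..k})"
| "tset k TC = insert RC (RY ` {1..k})"
| "tset k (TA i) = RY ` {i..k}"
| "tset k (TD i) = {RB, RC} \<union> RY ` {1..k} \<union> RZ ` {1..<i}"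

fun tcompat :: "nat \<Rightarrow> tlab \<Rightarrow> tlab \<Rightarrow> bool" where
  "tcompat k TB TC \<longleftrightarrow> True"
| "tcompat k TC TB \<longleftrightarrow> True"
| "tcompat k TB (TD j) \<longleftrightarrow> 1 \<le> j \<and> j \<le> k"
| "tcompat k (TD j) TB \<longleftrightarrow> 1 \<le> j \<and> j \<le> k"
| "tcompat k TC (TD j) \<longleftrightarrow> 1 \<le> j \<and> j \<le> k"
| "tcompat k (TD j) TC \<longleftrightarrow> 1 \<le> j \<and> j \<le> k"
| "tcompat k (TD i) (TD j) \<longleftrightarrow> 1 \<le> i \<and> i \<le> k \<and> 1 \<le> j \<and> j \<le> k"
| "tcompat k (TA i) (TD j) \<longleftrightarrow> 1 \<le> i \<and> i < j \<and> j \<le> k"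
| "tcompat k (TD j) (TA i) \<longleftrightarrow> 1 \<le> i \<and> i < j \<and> j \<le> k"
| "tcompat k _ _ \<longleftrightarrow> False"

lemma constructor_in_image_iff [simp]:
  "TA i \<in> TA ` S \<longleftrightarrow> i \<in> S" "TD i \<in> TD ` S \<longleftrightarrow> i \<in> S"
  "RY i \<in> RY ` S \<longleftrightarrow> i \<in> S" "RZ i \<in> RZ ` S \<longleftrightarrow> i \<in> S"
  by auto

lemma constructor_notin_image [simp]:
  "TB \<notin> TA ` S" "TC \<notin> TA ` S" "TD i \<notin> TA ` S" "TB \<notin> TD ` S" "TC \<notin> TD ` S" "TA i \<notin> TD ` S"
  "RB \<notin> RY ` S" "RC \<notin> RY ` S" "RZ i \<notin> RY ` S" "RB \<notin> RZ ` S" "RC \<notin> RZ ` S" "RY i \<notin> RZ ` S"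
  by auto

lemma rcompat_sym: "rcompat a b = rcompat b a"
  by (cases a; cases b) auto

lemma tcompat_sym: "tcompat k a b = tcompat k b a"
  by (cases a; cases b) auto

lemma labels_target: "labels (target k) = {TB, TC} \<union> TA ` {1..k-1} \<union> TD ` {1..k}"
  by (simp add: target_def labels_def)

lemma nodeC_target_0: "nodeC (target 0) = {{#TB, TC, TB#}, {#TB, TC, TC#}}"
  by (simp add: target_def nodeC_def)

lemma edgeC_target_0: "edgeC (target 0) = {{#TB, TC#}}"
  by (simp add: target_def edgeC_def)

lemma nodeC_target_pos:
  "0 < k \<Longrightarrow> nodeC (target k) = insert {#TB, TC, TD k#} ((\<lambda>i. {#TA i, TD i, TD k#}) ` {1..k-1})"
  by (auto simp: target_def nodeC_def)

lemma tcompat_iff: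
  "tcompat k a b \<longleftrightarrow>
     a \<in> insert TB (TD ` {1..k}) \<and> b \<in> insert TC (TD ` {1..k}) \<or>
     b \<in> insert TB (TD ` {1..k}) \<and> a \<in> insert TC (TD ` {1..k}) \<or>
     (\<exists>i j. 1 \<le> i \<and> i < j \<and> j \<le> k \<and> (a = TA i \<and> b = TD j \<or> b = TA i \<and> a = TD j))"
  by (cases a; cases b) auto

lemma edge_target_iff: "{#a, b#} \<in> edgeC (target k) \<longleftrightarrow> tcompat k a b"
  unfolding tcompat_iff by (cases "k = 0") (auto simp: target_def edgeC_def doubleton_mset_eq_iff)

lemma edgeC_target_cases:
  assumes "M \<in> edgeC (target k)"
  obtains a b where "M = {#a, b#}" "tcompat k a b"
  using assms edge_target_iff by (cases "k = 0") (auto simp: target_def edgeC_def)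

lemma wf_target: "wf_problem (target k)"
  unfolding wf_problem_def
proof
  fix M assume "M \<in> nodeC (target k) \<union> edgeC (target k)"
  then consider "M \<in> nodeC (target k)" | a b where "M = {#a, b#}" "tcompat k a b"
    by (blast elim: edgeC_target_cases)
  then show "set_mset M \<subseteq> labels (target k)"
  proof cases
    case 1
    then show ?thesis by (cases "k = 0") (auto simp: nodeC_target_0 nodeC_target_pos labels_target)
  next
    case 2
    then show ?thesis by (cases a; cases b) (auto simp: labels_target)
  qed
qed

lemma tcompat_TC_iff: "tcompat k x TC \<longleftrightarrow> x \<in> rset k RB"
  by (cases x) auto

lemma tcompat_TB_iff: "tcompat k TB y \<longleftrightarrow> y \<in> rset k RC"
  by (cases y) auto

lemma tcompat_TD_iff: "1 \<le> j \<Longrightarrow> j \<le> k \<Longrightarrow> tcompat k x (TD j) \<longleftrightarrow> x \<in> rset k (RY j)"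
  by (cases x) auto

lemma rset_nonempty: "a \<in> rlabels k \<Longrightarrow> rset k a \<noteq> {}"
  by (auto simp: rlabels_def)

lemma rset_subset_labels_target: "a \<in> rlabels k \<Longrightarrow> rset k a \<subseteq> labels (target k)"
  by (auto simp: rlabels_def labels_target; arith)

lemma TD_in_rset: "0 < k \<Longrightarrow> a \<in> rlabels k \<Longrightarrow> TD k \<in> rset k a"
  by (auto simp: rlabels_def)

lemma tcompat_biclique_TD_dominated:
  assumes "V \<noteq> {}" "V \<subseteq> TD ` {1..k}" "biclique (tcompat k) U V"
  shows "\<exists>j\<in>{1..k}. U \<subseteq> rset k (RY j) \<and> V \<subseteq> rset k (RZ j)"
proof -
  obtain j where j: "TD j \<in> V" "\<And>i. TD i \<in> V \<Longrightarrow> j \<le> i"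
    using assms(1,2) exists_least_iff[of "\<lambda>j. TD j \<in> V"] by (metis ex_in_conv imageE leI subsetD)
  then have "j \<in> {1..k}" using assms(2) by auto
  moreover have "V \<subseteq> rset k (RZ j)" using assms(2) j(2) by fastforce
  moreover have "U \<subseteq> rset k (RY j)"
  proof
    fix u assume "u \<in> U"
    then have "tcompat k u (TD j)" using assms(3) j(1) by (auto simp: biclique_def)
    then show "u \<in> rset k (RY j)" using tcompat_TD_iff \<open>j \<in> {1..k}\<close> by simp
  qed
  ultimately show ?thesis by blast
qed

lemma tcompat_biclique_dominated:
  assumes ne: "X \<noteq> {}" "Y \<noteq> {}" and sub: "X \<subseteq> labels (target k)" "Y \<subseteq> labels (target k)"
    and bic: "biclique (tcompat k) X Y"
  shows "\<exists>(A, B)\<in>(\<lambda>(a, b). (rset k a, rset k b)) ` redges k. X \<subseteq> A \<and> Y \<subseteq> B \<or> X \<subseteq> B \<and> Y \<subseteq> A"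
proof -
  have bic': "biclique (tcompat k) Y X" using bic unfolding biclique_def by (metis tcompat_sym)
  consider "Y \<subseteq> TD ` {1..k}" | "X \<subseteq> TD ` {1..k}"
    | x y where "x \<in> X" "y \<in> Y" "x \<notin> TD ` {1..k}" "y \<notin> TD ` {1..k}"
    by blast
  then show ?thesis
  proof cases
    case 1
    then show ?thesis
      using tcompat_biclique_TD_dominated[OF ne(2) 1 bic] by (force simp: redges_def)
  next
    case 2
    then show ?thesis
      using tcompat_biclique_TD_dominated[OF ne(1) 2 bic'] by (force simp: redges_def)
  next
    case 3
    then have "tcompat k x y" "x \<in> labels (target k)" "y \<in> labels (target k)"
      using bic sub by (auto simp: biclique_def)
    with 3 have "x = TB \<and> y = TC \<or> x = TC \<and> y = TB"
      unfolding labels_target by (cases x; cases y) auto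
    then show ?thesis
    proof
      assume "x = TB \<and> y = TC"
      then have "X \<subseteq> rset k RB" "Y \<subseteq> rset k RC"
        using 3 bic
        unfolding biclique_def subset_iff tcompat_TB_iff[symmetric] tcompat_TC_iff[symmetric]
        by blast+
      then show ?thesis by (auto simp: redges_def)
    next
      assume "x = TC \<and> y = TB"
      then have "Y \<subseteq> rset k RB" "X \<subseteq> rset k RC"
        using 3 bic'
        unfolding biclique_def subset_iff tcompat_TB_iff[symmetric] tcompat_TC_iff[symmetric]
        by blast+
      then show ?thesis by (auto simp: redges_def)
    qed
  qed
qed

lemma labels_rproblem: "labels (rproblem k) = rlabels k"
  and nodeC_rproblem: "nodeC (rproblem k) = {{#a, b, c#} | a b c. a \<in> rlabels k \<and> b \<in> rlabels k
     \<and> c \<in> rlabels k \<and> (rcompat a b \<or> rcompat a c \<or> rcompat b c)}"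
  and edgeC_rproblem: "edgeC (rproblem k) = (\<lambda>(a, b). {#a, b#}) ` redges k"
  by (simp_all add: rproblem_def labels_def nodeC_def edgeC_def)

lemma redges_subset: "(a, b) \<in> redges k \<Longrightarrow> a \<in> rlabels k \<and> b \<in> rlabels k"
  by (auto simp: redges_def rlabels_def)

lemma redge_biclique: "(a, b) \<in> redges k \<Longrightarrow> biclique (tcompat k) (rset k a) (rset k b)"
  by (auto simp: redges_def biclique_def)

lemma redge_closed_fst: "(a, b) \<in> redges k \<Longrightarrow> biclique (tcompat k) {x} (rset k b) \<Longrightarrow> x \<in> rset k a"
  by (auto simp: redges_def biclique_def tcompat_TC_iff tcompat_TD_iff)

lemma redge_closed_snd:
  assumes "(a, b) \<in> redges k" "biclique (tcompat k) (rset k a) {y}"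
  shows "y \<in> rset k b"
  using assms(1)
proof (cases rule: insertE[OF assms(1)[unfolded redges_def]])
  case 1
  then show ?thesis using assms(2) by (auto simp: biclique_def tcompat_TB_iff)
next
  case 2
  then obtain j where j: "a = RY j" "b = RZ j" "j \<in> {1..k}" by auto
  have "tcompat k TB y" "tcompat k TC y" using assms(2) j by (auto simp: biclique_def)
  then obtain i where i: "y = TD i" "i \<in> {1..k}" by (cases y) auto
  have "\<not> i < j"
  proof
    assume "i < j"
    then have "TA i \<in> rset k a" using i j by auto
    then show False using assms(2) i by (auto simp: biclique_def)
  qed
  then show ?thesis using i j by auto
qed

lemma edgeC_RE_target: "edgeC (RE (target k)) = image_mset (rset k) ` edgeC (rproblem k)"
proof -
  have "maximal_configs 2 (labels (target k)) (edgeC (target k))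
      = (\<lambda>(A, B). {#A, B#}) ` (\<lambda>(a, b). (rset k a, rset k b)) ` redges k"
  proof (rule maximal_configs_2_eqI[where R = "tcompat k"])
    show "{#x, y#} \<in> edgeC (target k) \<longleftrightarrow> tcompat k x y" for x y
      by (rule edge_target_iff)
  next
    fix A B assume "(A, B) \<in> (\<lambda>(a, b). (rset k a, rset k b)) ` redges k"
    then obtain a b where "(a, b) \<in> redges k" "A = rset k a" "B = rset k b" by auto
    then show "A \<noteq> {} \<and> B \<noteq> {} \<and> A \<subseteq> labels (target k) \<and> B \<subseteq> labels (target k)
        \<and> biclique (tcompat k) A B"
      using redges_subset rset_nonempty rset_subset_labels_target redge_biclique by blast
  next
    fix X Y assume "X \<noteq> {}" "Y \<noteq> {}" "X \<subseteq> labels (target k)" "Y \<subseteq> labels (target k)"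
      "biclique (tcompat k) X Y"
    then show "\<exists>(A, B)\<in>(\<lambda>(a, b). (rset k a, rset k b)) ` redges k. X \<subseteq> A \<and> Y \<subseteq> B \<or> X \<subseteq> B \<and> Y \<subseteq> A"
      by (rule tcompat_biclique_dominated)
  qed (auto simp: redge_closed_fst redge_closed_snd)
  then show ?thesis
    by (simp add: edgeC_RE edgeC_rproblem image_image split_beta)
qed

lemma rcompat_if_TB_TC: "TB \<in> rset k a \<Longrightarrow> TC \<in> rset k b \<Longrightarrow> rcompat a b"
  by (cases a; cases b) auto

lemma rcompat_if_TA_TD: "TA i \<in> rset k a \<Longrightarrow> TD i \<in> rset k b \<Longrightarrow> rcompat a b"
  by (cases a; cases b) auto

lemma rcompat_node_witness:
  assumes "0 < k" "a \<in> rlabels k" "b \<in> rlabels k" "rcompat a b"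
  shows "\<exists>x\<in>rset k a. \<exists>y\<in>rset k b. {#x, y, TD k#} \<in> nodeC (target k)"
proof -
  have BC: "{#TB, TC, TD k#} \<in> nodeC (target k)" "{#TC, TB, TD k#} \<in> nodeC (target k)"
    using assms(1) by (simp_all add: nodeC_target_pos add_mset_commute)
  have AD: "{#TA j, TD j, TD k#} \<in> nodeC (target k)" "{#TD j, TA j, TD k#} \<in> nodeC (target k)"
    if "1 \<le> j" "j < k" for j
    using assms(1) that by (auto simp: nodeC_target_pos add_mset_commute)
  show ?thesis
  proof (cases "\<exists>m j. a = RY m \<and> b = RZ j \<or> a = RZ j \<and> b = RY m")
    case True
    then obtain m j where mj: "a = RY m \<and> b = RZ j \<or> a = RZ j \<and> b = RY m" by blast
    with assms have "1 \<le> j" "j < m" "m \<le> k" by (auto simp: rlabels_def)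
    then show ?thesis using mj AD[of j] by fastforce
  next
    case False
    with assms(4) have "TB \<in> rset k a \<and> TC \<in> rset k b \<or> TC \<in> rset k a \<and> TB \<in> rset k b"
      by (cases a; cases b) auto
    then show ?thesis using BC by blast
  qed
qed

lemma some_choice_target_of_rcompat:
  assumes "0 < k" "a \<in> rlabels k" "b \<in> rlabels k" "c \<in> rlabels k" "rcompat a b"
  shows "some_choice_in {#rset k a, rset k b, rset k c#} (nodeC (target k))"
proof -
  obtain x y where "x \<in> rset k a" "y \<in> rset k b" "{#x, y, TD k#} \<in> nodeC (target k)"
    using rcompat_node_witness[OF assms(1-3,5)] by blast
  then show ?thesis
    using TD_in_rset[OF assms(1,4)] unfolding some_choice_in_triple_iff by blast
qed

lemma rcompat_of_target_node:
  assumes "0 < k" "x \<in> rset k a" "y \<in> rset k b" "z \<in> rset k c" "{#x, y, z#} \<in> nodeC (target k)"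
  shows "rcompat a b \<or> rcompat a c \<or> rcompat b c"
proof -
  from assms consider "{#x, y, z#} = {#TB, TC, TD k#}"
    | i where "{#x, y, z#} = {#TA i, TD i, TD k#}"
    by (auto simp: nodeC_target_pos)
  then show ?thesis
  proof cases
    case 1
    then show ?thesis
      unfolding triple_mset_eq_iff using assms(2-4) rcompat_if_TB_TC[of k] rcompat_sym by metis
  next
    case 2
    then show ?thesis
      unfolding triple_mset_eq_iff using assms(2-4) rcompat_if_TA_TD[of i k] rcompat_sym by metis
  qed
qed

lemma some_choice_target_iff:
  assumes abc: "a \<in> rlabels k" "b \<in> rlabels k" "c \<in> rlabels k"
  shows "some_choice_in {#rset k a, rset k b, rset k c#} (nodeC (target k)) \<longleftrightarrow>
    rcompat a b \<or> rcompat a c \<or> rcompat b c"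
proof (cases "k = 0")
  case True
  then have "a \<in> {RB, RC}" "b \<in> {RB, RC}" "c \<in> {RB, RC}" using abc by (auto simp: rlabels_def)
  then show ?thesis using True
    by (cases a; cases b; cases c)
      (simp_all add: some_choice_in_triple_iff nodeC_target_0 triple_mset_eq_iff
        doubleton_mset_eq_iff)
next
  case False
  then have k: "0 < k" by simp
  show ?thesis
  proof
    assume "some_choice_in {#rset k a, rset k b, rset k c#} (nodeC (target k))"
    then show "rcompat a b \<or> rcompat a c \<or> rcompat b c"
      unfolding some_choice_in_triple_iff using rcompat_of_target_node[OF k] by blast
  next
    have acb: "{#rset k a, rset k b, rset k c#} = {#rset k a, rset k c, rset k b#}"
      and bca: "{#rset k a, rset k b, rset k c#} = {#rset k b, rset k c, rset k a#}"
      by (simp_all add: add_mset_commute)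
    assume "rcompat a b \<or> rcompat a c \<or> rcompat b c"
    then consider "rcompat a b" | "rcompat a c" | "rcompat b c" by blast
    then show "some_choice_in {#rset k a, rset k b, rset k c#} (nodeC (target k))"
    proof cases
      case 1
      then show ?thesis using some_choice_target_of_rcompat[OF k abc] by blast
    next
      case 2
      then show ?thesis unfolding acb using some_choice_target_of_rcompat[OF k abc(1,3,2)] by blast
    next
      case 3
      then show ?thesis unfolding bca using some_choice_target_of_rcompat[OF k abc(2,3,1)] by blast
    qed
  qed
qed

lemma labels_RE_target: "labels (RE (target k)) = rset k ` rlabels k"
proof -
  have "rlabels k = fst ` redges k \<union> snd ` redges k"
    by (auto simp: redges_def rlabels_def image_iff)
  then show ?thesis
    by (auto simp: labels_RE edgeC_RE_target edgeC_rproblem split_beta)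
qed

lemma nodeC_RE_target: "nodeC (RE (target k)) = image_mset (rset k) ` nodeC (rproblem k)"
proof (intro set_eqI iffI)
  fix M assume "M \<in> nodeC (RE (target k))"
  then have M: "size M = 3" "set_mset M \<subseteq> rset k ` rlabels k" "some_choice_in M (nodeC (target k))"
    by (auto simp: nodeC_RE labels_RE_target some_choice_configs_def)
  then obtain a b c where abc: "a \<in> rlabels k" "b \<in> rlabels k" "c \<in> rlabels k"
    and M_eq: "M = {#rset k a, rset k b, rset k c#}"
    by (auto elim!: size_3_cases)
  then have "{#a, b, c#} \<in> nodeC (rproblem k)"
    using M(3) some_choice_target_iff[OF abc] by (auto simp: nodeC_rproblem)
  then show "M \<in> image_mset (rset k) ` nodeC (rproblem k)"
    using M_eq by force
next
  fix M assume "M \<in> image_mset (rset k) ` nodeC (rproblem k)"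
  then obtain a b c where abc: "a \<in> rlabels k" "b \<in> rlabels k" "c \<in> rlabels k"
    and "rcompat a b \<or> rcompat a c \<or> rcompat b c" and "M = {#rset k a, rset k b, rset k c#}"
    by (auto simp: nodeC_rproblem)
  then show "M \<in> nodeC (RE (target k))"
    using some_choice_target_iff[OF abc]
    by (auto simp: nodeC_RE labels_RE_target some_choice_configs_def)
qed

lemma RE_target: "RE (target k) = rename (rset k) (rproblem k)"
  by (rule problem_eqI)
    (simp_all add: labels_RE_target labels_rproblem nodeC_RE_target edgeC_RE_target)

section \<open>R-bar (rproblem k) is target (k + 1)\<close>

definition tpairs :: "nat \<Rightarrow> (tlab \<times> tlab) set" where
  "tpairs k = insert (TB, TC) ((\<lambda>i. (TA i, TD i)) ` {1..k})"

lemma nodeC_target_Suc: "nodeC (target (Suc k)) = (\<lambda>(a, b). {#a, b, TD (Suc k)#}) ` tpairs k"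
  by (auto simp: nodeC_target_pos tpairs_def)

lemma tset_TD_Suc: "tset k (TD (Suc k)) = rlabels k"
  by (auto simp: rlabels_def)

lemma node_rproblem_iff:
  "{#x, y, z#} \<in> nodeC (rproblem k) \<longleftrightarrow>
     x \<in> rlabels k \<and> y \<in> rlabels k \<and> z \<in> rlabels k \<and> (rcompat x y \<or> rcompat x z \<or> rcompat y z)"
  (is "?lhs \<longleftrightarrow> ?rhs")
proof
  assume ?lhs
  then obtain a b c where abc: "{#x, y, z#} = {#a, b, c#}" "a \<in> rlabels k" "b \<in> rlabels k"
    "c \<in> rlabels k" "rcompat a b \<or> rcompat a c \<or> rcompat b c"
    unfolding nodeC_rproblem by blast
  then show ?rhs unfolding triple_mset_eq_iff by (auto simp: rcompat_sym)
qed (auto simp: nodeC_rproblem)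

lemma rcompat_RC_iff: "a \<in> rlabels k \<Longrightarrow> rcompat a RC \<longleftrightarrow> a \<in> tset k TB"
  by (auto simp: rlabels_def)

lemma rcompat_RB_iff: "b \<in> rlabels k \<Longrightarrow> rcompat RB b \<longleftrightarrow> b \<in> tset k TC"
  by (auto simp: rlabels_def)

lemma rcompat_RY_iff: "a \<in> rlabels k \<Longrightarrow> rcompat a (RY m) \<longleftrightarrow> a \<in> tset k (TD m)"
  by (auto simp: rlabels_def)

lemma incompatible_rlabels:
  "\<not> rcompat u v \<Longrightarrow> u = RB \<and> v = RB \<or> u = RC \<and> v = RC
     \<or> (\<exists>j. u = RZ j \<and> (v = RB \<or> v = RC \<or> (\<exists>j'. v = RZ j') \<or> (\<exists>m. v = RY m \<and> m \<le> j)))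
     \<or> (\<exists>j. v = RZ j \<and> (u = RB \<or> u = RC \<or> (\<exists>m. u = RY m \<and> m \<le> j)))"
  by (cases u; cases v) auto

lemma independent_triple_of_incompatible_pairs:
  assumes "\<not> rcompat x1 y1" "\<not> rcompat x2 z2" "\<not> rcompat y3 z3"
  shows "\<exists>x\<in>{x1, x2}. \<exists>y\<in>{y1, y3}. \<exists>z\<in>{z2, z3}. \<not> rcompat x y \<and> \<not> rcompat x z \<and> \<not> rcompat y z"
  using incompatible_rlabels[OF assms(1)] incompatible_rlabels[OF assms(2)]
    incompatible_rlabels[OF assms(3)]
  by (elim disjE exE conjE) auto

lemma rcompat_triples_biclique:
  assumes "\<forall>x\<in>X. \<forall>y\<in>Y. \<forall>z\<in>Z. rcompat x y \<or> rcompat x z \<or> rcompat y z"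
  shows "biclique rcompat X Y \<or> biclique rcompat X Z \<or> biclique rcompat Y Z"
proof (rule ccontr)
  assume "\<not> ?thesis"
  then obtain x1 y1 x2 z2 y3 z3 where
    "x1 \<in> X" "y1 \<in> Y" "\<not> rcompat x1 y1" "x2 \<in> X" "z2 \<in> Z" "\<not> rcompat x2 z2"
    "y3 \<in> Y" "z3 \<in> Z" "\<not> rcompat y3 z3"
    by (auto simp: biclique_def)
  with independent_triple_of_incompatible_pairs[of x1 y1 x2 z2 y3 z3] assms show False
    by blast
qed

lemma rcompat_biclique_RY_dominated:
  assumes "V \<noteq> {}" "V \<subseteq> RY ` {1..k}" "U \<subseteq> rlabels k" "biclique rcompat U V"
  shows "\<exists>i\<in>{1..k}. V \<subseteq> tset k (TA i) \<and> U \<subseteq> tset k (TD i)"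
proof -
  obtain i where i: "RY i \<in> V" "\<And>m. RY m \<in> V \<Longrightarrow> i \<le> m"
    using assms(1,2) exists_least_iff[of "\<lambda>m. RY m \<in> V"] by (metis ex_in_conv imageE leI subsetD)
  then have "i \<in> {1..k}" using assms(2) by auto
  moreover have "V \<subseteq> tset k (TA i)" using assms(2) i(2) by fastforce
  moreover have "U \<subseteq> tset k (TD i)"
  proof
    fix u assume "u \<in> U"
    then have "rcompat u (RY i)" using assms(4) i(1) by (auto simp: biclique_def)
    then show "u \<in> tset k (TD i)" using rcompat_RY_iff assms(3) \<open>u \<in> U\<close> by blast
  qed
  ultimately show ?thesis by blast
qed

lemma rcompat_biclique_dominated:
  assumes ne: "X \<noteq> {}" "Y \<noteq> {}" and sub: "X \<subseteq> rlabels k" "Y \<subseteq> rlabels k"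
    and bic: "biclique rcompat X Y"
  shows "\<exists>(a, b)\<in>tpairs k. X \<subseteq> tset k a \<and> Y \<subseteq> tset k b \<or> X \<subseteq> tset k b \<and> Y \<subseteq> tset k a"
proof -
  have bic': "biclique rcompat Y X" using bic unfolding biclique_def by (metis rcompat_sym)
  consider "Y \<subseteq> RY ` {1..k}" | "X \<subseteq> RY ` {1..k}"
    | x y where "x \<in> X" "y \<in> Y" "x \<notin> RY ` {1..k}" "y \<notin> RY ` {1..k}"
    by blast
  then show ?thesis
  proof cases
    case 1
    then show ?thesis
      using rcompat_biclique_RY_dominated[OF ne(2) 1 sub(1) bic] by (force simp: tpairs_def)
  next
    case 2
    then show ?thesis
      using rcompat_biclique_RY_dominated[OF ne(1) 2 sub(2) bic'] by (force simp: tpairs_def)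
  next
    case 3
    then have "rcompat x y" "x \<in> rlabels k" "y \<in> rlabels k"
      using bic sub by (auto simp: biclique_def)
    with 3 have "x = RB \<and> y = RC \<or> x = RC \<and> y = RB"
      unfolding rlabels_def by (cases x; cases y) auto
    then show ?thesis
    proof
      assume "x = RB \<and> y = RC"
      then have "X \<subseteq> tset k TB" "Y \<subseteq> tset k TC"
        using 3 bic sub rcompat_RC_iff rcompat_RB_iff unfolding biclique_def by blast+
      then show ?thesis by (auto simp: tpairs_def)
    next
      assume "x = RC \<and> y = RB"
      then have "Y \<subseteq> tset k TB" "X \<subseteq> tset k TC"
        using 3 bic' sub rcompat_RC_iff rcompat_RB_iff unfolding biclique_def by blast+
      then show ?thesis by (auto simp: tpairs_def)
    qed
  qed
qed

lemma tpairs_subset: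
  "(a, b) \<in> tpairs k \<Longrightarrow>
    tset k a \<noteq> {} \<and> tset k b \<noteq> {} \<and> tset k a \<subseteq> rlabels k \<and> tset k b \<subseteq> rlabels k"
  by (auto simp: tpairs_def rlabels_def)

lemma tpair_biclique: "(a, b) \<in> tpairs k \<Longrightarrow> biclique rcompat (tset k a) (tset k b)"
  by (auto simp: tpairs_def biclique_def)

lemma tpair_closed_fst:
  assumes "(a, b) \<in> tpairs k" "x \<in> rlabels k"
    and "\<forall>y\<in>tset k b. \<forall>z\<in>rlabels k. rcompat x y \<or> rcompat x z \<or> rcompat y z"
  shows "x \<in> tset k a"
proof (cases rule: insertE[OF assms(1)[unfolded tpairs_def]])
  case 1
  have "RC \<in> tset k b" "RC \<in> rlabels k" using 1 by (auto simp: rlabels_def)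
  then have "rcompat x RC" using assms(3) by fastforce
  then show ?thesis using 1 rcompat_RC_iff assms(2) by auto
next
  case 2
  then obtain i where i: "a = TA i" "b = TD i" "i \<in> {1..k}" by auto
  have "RB \<in> tset k b" "RC \<in> tset k b" "RB \<in> rlabels k" "RC \<in> rlabels k"
    using i by (auto simp: rlabels_def)
  then have "rcompat x RB" "rcompat x RC" using assms(3) by fastforce+
  then obtain m where m: "x = RY m" "m \<in> {1..k}"
    using assms(2) by (cases x) (auto simp: rlabels_def)
  have "\<not> m < i"
  proof
    assume "m < i"
    then have "RZ m \<in> tset k b" "RZ m \<in> rlabels k" using i m by (auto simp: rlabels_def)
    then show False using assms(3) m by fastforce
  qed
  then show ?thesis using i m by auto
qed

lemma tpair_closed_snd:
  assumes "(a, b) \<in> tpairs k" "y \<in> rlabels k"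
    and "\<forall>x\<in>tset k a. \<forall>z\<in>rlabels k. rcompat x y \<or> rcompat x z \<or> rcompat y z"
  shows "y \<in> tset k b"
proof (cases rule: insertE[OF assms(1)[unfolded tpairs_def]])
  case 1
  have "RB \<in> tset k a" "RB \<in> rlabels k" using 1 by (auto simp: rlabels_def)
  then have "rcompat RB y" using assms(3) rcompat_sym by fastforce
  then show ?thesis using 1 rcompat_RB_iff assms(2) by auto
next
  case 2
  then obtain i where i: "a = TA i" "b = TD i" "i \<in> {1..k}" by auto
  have "RY i \<in> tset k a" using i by auto
  then have "rcompat (RY i) y \<or> rcompat y y" using assms(2,3) by blast
  then show ?thesis using assms(2) i by (cases y) (auto simp: rlabels_def)
qed

lemma tpairs_dominate_covered_triples:
  assumes ne: "X \<noteq> {}" "Y \<noteq> {}" "Z \<noteq> {}" and sub: "X \<subseteq> rlabels k" "Y \<subseteq> rlabels k" "Z \<subseteq> rlabels k"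
    and covered: "\<forall>x\<in>X. \<forall>y\<in>Y. \<forall>z\<in>Z. rcompat x y \<or> rcompat x z \<or> rcompat y z"
  shows "\<exists>(a, b)\<in>tpairs k. rel_mset (\<subseteq>) {#X, Y, Z#} {#tset k a, tset k b, rlabels k#}"
proof -
  have pair: "\<exists>(a, b)\<in>tpairs k. rel_mset (\<subseteq>) {#U, V, W#} {#tset k a, tset k b, rlabels k#}"
    if UV: "U \<noteq> {}" "V \<noteq> {}" "U \<subseteq> rlabels k" "V \<subseteq> rlabels k"
      and W: "W \<subseteq> rlabels k" and bic: "biclique rcompat U V" for U V W
  proof -
    obtain a b where ab: "(a, b) \<in> tpairs k"
      "U \<subseteq> tset k a \<and> V \<subseteq> tset k b \<or> U \<subseteq> tset k b \<and> V \<subseteq> tset k a"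
      using rcompat_biclique_dominated[OF UV bic] by blast
    from ab(2) have "rel_mset (\<subseteq>) {#U, V, W#} {#tset k a, tset k b, rlabels k#}"
    proof
      assume "U \<subseteq> tset k b \<and> V \<subseteq> tset k a"
      then have "rel_mset (\<subseteq>) {#U, V, W#} {#tset k b, tset k a, rlabels k#}"
        using W by (auto intro: rel_mset_tripleI)
      then show ?thesis by (simp add: add_mset_commute)
    qed (use W in \<open>auto intro: rel_mset_tripleI\<close>)
    with ab(1) show ?thesis by blast
  qed
  have xzy: "{#X, Y, Z#} = {#X, Z, Y#}" and yzx: "{#X, Y, Z#} = {#Y, Z, X#}"
    by (simp_all add: add_mset_commute)
  from rcompat_triples_biclique[OF covered]
  consider "biclique rcompat X Y" | "biclique rcompat X Z" | "biclique rcompat Y Z" by blast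
  then show ?thesis
  proof cases
    case 1
    then show ?thesis using ne sub by (intro pair) auto
  next
    case 2
    then show ?thesis unfolding xzy using ne sub by (intro pair) auto
  next
    case 3
    then show ?thesis unfolding yzx using ne sub by (intro pair) auto
  qed
qed

lemma nodeC_REbar_rproblem:
  "nodeC (REbar (rproblem k)) = image_mset (tset k) ` nodeC (target (Suc k))"
proof -
  let ?PR = "(\<lambda>(a, b). (tset k a, tset k b, rlabels k)) ` tpairs k"
  have "maximal_configs 3 (rlabels k) (nodeC (rproblem k)) = (\<lambda>(A, B, D). {#A, B, D#}) ` ?PR"
  proof (rule maximal_configs_3_eqI[where N = "\<lambda>x y z. rcompat x y \<or> rcompat x z \<or> rcompat y z"])
    show "{#x, y, z#} \<in> nodeC (rproblem k) \<longleftrightarrow> rcompat x y \<or> rcompat x z \<or> rcompat y z"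
      if "x \<in> rlabels k" "y \<in> rlabels k" "z \<in> rlabels k" for x y z
      using that by (simp add: node_rproblem_iff)
  next
    fix A B D assume "(A, B, D) \<in> ?PR"
    then obtain a b where "(a, b) \<in> tpairs k" "A = tset k a" "B = tset k b" "D = rlabels k"
      by auto
    moreover have "rlabels k \<noteq> {}" by (auto simp: rlabels_def)
    ultimately show "A \<noteq> {} \<and> B \<noteq> {} \<and> D \<noteq> {} \<and> A \<subseteq> rlabels k \<and> B \<subseteq> rlabels k \<and> D \<subseteq> rlabels k
        \<and> (\<forall>x\<in>A. \<forall>y\<in>B. \<forall>z\<in>D. rcompat x y \<or> rcompat x z \<or> rcompat y z)"
      using tpairs_subset tpair_biclique unfolding biclique_def by blast
  next
    fix X Y Z
    assume "X \<noteq> {}" "Y \<noteq> {}" "Z \<noteq> {}" "X \<subseteq> rlabels k" "Y \<subseteq> rlabels k" "Z \<subseteq> rlabels k"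
      "\<forall>x\<in>X. \<forall>y\<in>Y. \<forall>z\<in>Z. rcompat x y \<or> rcompat x z \<or> rcompat y z"
    from tpairs_dominate_covered_triples[OF this]
    show "\<exists>(A, B, D)\<in>?PR. rel_mset (\<subseteq>) {#X, Y, Z#} {#A, B, D#}" by force
  qed (auto intro: tpair_closed_fst tpair_closed_snd)
  then show ?thesis
    by (simp add: nodeC_REbar labels_rproblem nodeC_target_Suc image_image split_beta tset_TD_Suc
        del: tset.simps)
qed

lemma edge_rproblem_iff: "{#u, v#} \<in> edgeC (rproblem k) \<longleftrightarrow> (u, v) \<in> redges k \<or> (v, u) \<in> redges k"
proof -
  have "{#u, v#} = {#v, u#}" by (simp add: add_mset_commute)
  then show ?thesis by (force simp: edgeC_rproblem doubleton_mset_eq_iff)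
qed

lemma some_choice_rproblem_edge_iff:
  assumes "a \<in> labels (target (Suc k))" "b \<in> labels (target (Suc k))"
  shows "some_choice_in {#tset k a, tset k b#} (edgeC (rproblem k)) \<longleftrightarrow> tcompat (Suc k) a b"
proof -
  have "some_choice_in {#tset k a, tset k b#} (edgeC (rproblem k)) \<longleftrightarrow>
      RB \<in> tset k a \<and> RC \<in> tset k b \<or> RB \<in> tset k b \<and> RC \<in> tset k a \<or>
      (\<exists>j\<in>{1..k}. RY j \<in> tset k a \<and> RZ j \<in> tset k b \<or> RY j \<in> tset k b \<and> RZ j \<in> tset k a)"
    by (auto simp: some_choice_in_doubleton_iff edge_rproblem_iff redges_def)
  also have "\<dots> \<longleftrightarrow> tcompat (Suc k) a b"
    using assms by (cases a; cases b) (auto simp: labels_target)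
  finally show ?thesis .
qed

lemma labels_target_Suc_node_labels:
  "labels (target (Suc k)) = (\<Union>M\<in>nodeC (target (Suc k)). set_mset M)"
  by (auto simp: nodeC_target_Suc labels_target tpairs_def le_Suc_eq)

lemma labels_REbar_rproblem: "labels (REbar (rproblem k)) = tset k ` labels (target (Suc k))"
  unfolding labels_REbar nodeC_REbar_rproblem labels_target_Suc_node_labels by (simp add: image_UN)

lemma edgeC_REbar_rproblem:
  "edgeC (REbar (rproblem k)) = image_mset (tset k) ` edgeC (target (Suc k))"
proof (intro set_eqI iffI)
  fix M assume "M \<in> edgeC (REbar (rproblem k))"
  then have M: "size M = 2" "set_mset M \<subseteq> tset k ` labels (target (Suc k))"
    "some_choice_in M (edgeC (rproblem k))"
    by (auto simp: edgeC_REbar labels_REbar_rproblem some_choice_configs_def)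
  then obtain a b where ab: "a \<in> labels (target (Suc k))" "b \<in> labels (target (Suc k))"
    and M_eq: "M = {#tset k a, tset k b#}"
    by (auto elim!: size_2_cases)
  then have "{#a, b#} \<in> edgeC (target (Suc k))"
    using M(3) some_choice_rproblem_edge_iff[OF ab] edge_target_iff by simp
  then show "M \<in> image_mset (tset k) ` edgeC (target (Suc k))"
    using M_eq by force
next
  fix M assume "M \<in> image_mset (tset k) ` edgeC (target (Suc k))"
  then obtain M0 where M0: "M0 \<in> edgeC (target (Suc k))" "M = image_mset (tset k) M0"
    by blast
  from M0(1) obtain a b where "M0 = {#a, b#}" "tcompat (Suc k) a b"
    by (rule edgeC_target_cases)
  with M0 have ab_edge: "{#a, b#} \<in> edgeC (target (Suc k))" and M_eq: "M = {#tset k a, tset k b#}"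
    by simp_all
  have "set_mset {#a, b#} \<subseteq> labels (target (Suc k))"
    using wf_target[of "Suc k"] ab_edge unfolding wf_problem_def by blast
  then have ab: "a \<in> labels (target (Suc k))" "b \<in> labels (target (Suc k))" by simp_all
  show "M \<in> edgeC (REbar (rproblem k))"
    using some_choice_rproblem_edge_iff[OF ab] edge_target_iff ab_edge ab M_eq
    by (auto simp: edgeC_REbar labels_REbar_rproblem some_choice_configs_def)
qed

lemma REbar_rproblem: "REbar (rproblem k) = rename (tset k) (target (Suc k))"
  by (rule problem_eqI)
    (simp_all add: labels_REbar_rproblem nodeC_REbar_rproblem edgeC_REbar_rproblem)

lemma wf_rproblem: "wf_problem (rproblem k)"
  by (auto simp: wf_problem_def labels_rproblem nodeC_rproblem edgeC_rproblem redges_def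
      rlabels_def)

lemma inj_on_rset: "inj_on (rset k) (rlabels k)"
proof (rule inj_onI)
  fix a b assume a: "a \<in> rlabels k" and b: "b \<in> rlabels k" and eq: "rset k a = rset k b"
  have mem: "x \<in> rset k a \<longleftrightarrow> x \<in> rset k b" for x using eq by simp
  show "a = b"
  proof (cases a)
    case (RY m)
    show ?thesis
    proof (cases b)
      case (RY m')
      have "\<not> m < m'" "\<not> m' < m"
        using mem[of "TA m"] mem[of "TA m'"] a b \<open>a = RY m\<close> \<open>b = RY m'\<close> by (auto simp: rlabels_def)
      then show ?thesis using \<open>a = RY m\<close> \<open>b = RY m'\<close> by simp
    qed (use RY mem[of TB] mem[of TC] in simp_all)
  next
    case (RZ j)
    show ?thesis
    proof (cases b)
      case (RZ j')
      have "j' \<le> j" "j \<le> j'"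
        using mem[of "TD j"] mem[of "TD j'"] a b \<open>a = RZ j\<close> \<open>b = RZ j'\<close> by (auto simp: rlabels_def)
      then show ?thesis using \<open>a = RZ j\<close> \<open>b = RZ j'\<close> by simp
    qed (use RZ mem[of TB] mem[of TC] in simp_all)
  qed (use mem[of TB] mem[of TC] in \<open>cases b; simp_all\<close>)+
qed

lemma inj_on_tset: "inj_on (tset k) (labels (target (Suc k)))"
proof (rule inj_onI)
  fix a b assume a: "a \<in> labels (target (Suc k))" and b: "b \<in> labels (target (Suc k))"
    and eq: "tset k a = tset k b"
  have mem: "x \<in> tset k a \<longleftrightarrow> x \<in> tset k b" for x using eq by simp
  show "a = b"
  proof (cases a)
    case (TA i)
    show ?thesis
    proof (cases b)
      case (TA i')
      have "i' \<le> i" "i \<le> i'"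
        using mem[of "RY i"] mem[of "RY i'"] a b \<open>a = TA i\<close> \<open>b = TA i'\<close>
        by (auto simp: labels_target)
      then show ?thesis using \<open>a = TA i\<close> \<open>b = TA i'\<close> by simp
    qed (use TA mem[of RB] mem[of RC] in simp_all)
  next
    case (TD i)
    show ?thesis
    proof (cases b)
      case (TD i')
      have "\<not> i < i'" "\<not> i' < i"
        using mem[of "RZ i"] mem[of "RZ i'"] a b \<open>a = TD i\<close> \<open>b = TD i'\<close>
        by (auto simp: labels_target)
      then show ?thesis using \<open>a = TD i\<close> \<open>b = TD i'\<close> by simp
    qed (use TD mem[of RB] mem[of RC] in simp_all)
  qed (use mem[of RB] mem[of RC] in \<open>cases b; simp_all\<close>)+
qed

lemma tset_subset_rlabels: "a \<in> labels (target (Suc k)) \<Longrightarrow> tset k a \<subseteq> rlabels k"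
  by (cases a) (auto simp: labels_target rlabels_def)

lemma finite_rset: "finite (rset k a)"
  by (cases a) auto

lemma finite_tset: "finite (tset k a)"
  by (cases a) auto

(* Abs_fset is unspecified on infinite sets, so enc is injective only on finite ones. *)
lemma inj_on_enc: "inj_on enc {X. finite X}"
  by (rule inj_onI) (simp add: enc_def Abs_fset_inject)

lemma inj_on_enc_image_comp:
  assumes r: "inj_on r A" and rA: "\<And>a. a \<in> A \<Longrightarrow> r a \<subseteq> B \<and> finite (r a)" and g: "inj_on g B"
  shows "inj_on (enc \<circ> image g \<circ> r) A"
proof -
  have "r ` A \<subseteq> Pow B" using rA by auto
  then have "inj_on (image g) (r ` A)" by (rule inj_on_subset[OF inj_on_image_Pow[OF g]])
  with r have "inj_on (image g \<circ> r) A" by (rule comp_inj_on)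
  moreover have "(image g \<circ> r) ` A \<subseteq> {X. finite X}" using rA by auto
  ultimately have "inj_on (enc \<circ> (image g \<circ> r)) A"
    by (metis comp_inj_on inj_on_enc inj_on_subset)
  then show ?thesis by (simp add: comp_assoc)
qed

lemma Q_rename_target:
  assumes h: "inj_on h (labels (target k))"
  shows "\<exists>h'. inj_on h' (labels (target (Suc k))) \<and>
    Q (rename h (target k)) = rename h' (target (Suc k))"
proof -
  let ?f = "enc \<circ> image h \<circ> rset k"
  have inj_f: "inj_on ?f (rlabels k)"
    by (rule inj_on_enc_image_comp[OF inj_on_rset _ h])
      (simp add: rset_subset_labels_target finite_rset)
  have "Q (rename h (target k)) = rename enc (REbar (rename ?f (rproblem k)))"
    by (simp add: Q_def RE_rename[OF wf_target h] RE_target rename_comp comp_assoc)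
  also have "\<dots> = rename (enc \<circ> image ?f \<circ> tset k) (target (Suc k))"
    using REbar_rename[OF wf_rproblem, of ?f] inj_f
    by (simp add: labels_rproblem REbar_rproblem rename_comp comp_assoc)
  finally have "Q (rename h (target k)) = rename (enc \<circ> image ?f \<circ> tset k) (target (Suc k))" .
  moreover have "inj_on (enc \<circ> image ?f \<circ> tset k) (labels (target (Suc k)))"
    by (rule inj_on_enc_image_comp[OF inj_on_tset _ inj_f])
      (simp add: tset_subset_rlabels finite_tset)
  ultimately show ?thesis by blast
qed

lemma labels_SSO: "labels SSO = {Atom 0, Atom 1}"
  and nodeC_SSO:
    "nodeC SSO = {M. size M = 3 \<and> set_mset M \<subseteq> {Atom 0, Atom 1} \<and> Atom 0 \<in># M \<and> Atom 1 \<in># M}"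
  and edgeC_SSO: "edgeC SSO = {{#Atom 0, Atom 1#}}"
  by (simp_all add: SSO_def labels_def nodeC_def edgeC_def)

lemma SSO_rename_target_0: "\<exists>h. inj_on h (labels (target 0)) \<and> SSO = rename h (target 0)"
proof (intro exI conjI)
  let ?h = "\<lambda>t. if t = TB then Atom 0 else Atom 1"
  show "inj_on ?h (labels (target 0))"
    by (auto simp: labels_target inj_on_def)
  have "nodeC SSO = image_mset ?h ` nodeC (target 0)"
  proof (intro set_eqI iffI)
    fix M assume "M \<in> nodeC SSO"
    then have M: "size M = 3" "set_mset M \<subseteq> {Atom 0, Atom 1}" "Atom 0 \<in># M" "Atom 1 \<in># M"
      by (auto simp: nodeC_SSO)
    then obtain a b c where "M = {#a, b, c#}" by (auto elim: size_3_cases)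
    with M have "M = {#Atom 0, Atom 1, Atom 0#} \<or> M = {#Atom 0, Atom 1, Atom 1#}"
      by (auto simp: add_mset_commute)
    then show "M \<in> image_mset ?h ` nodeC (target 0)"
      unfolding nodeC_target_0 by auto
  next
    fix M assume "M \<in> image_mset ?h ` nodeC (target 0)"
    then show "M \<in> nodeC SSO"
      unfolding nodeC_target_0 by (auto simp: nodeC_SSO)
  qed
  then show "SSO = rename ?h (target 0)"
    by (intro problem_eqI) (auto simp: labels_SSO edgeC_SSO labels_target edgeC_target_0)
qed

lemma Q_power_SSO: "\<exists>h. inj_on h (labels (target k)) \<and> (Q ^^ k) SSO = rename h (target k)"
proof (induction k)
  case 0
  then show ?case using SSO_rename_target_0 by simp
next
  case (Suc k)
  then obtain h where "inj_on h (labels (target k))" "(Q ^^ k) SSO = rename h (target k)"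
    by blast
  with Q_rename_target[of h k] show ?case by auto
qed

lemma iso_problem_rename:
  assumes wf: "wf_problem P" and h: "inj_on h (labels P)"
  shows "iso_problem (rename h P) P"
  unfolding iso_problem_def
proof (intro exI conjI)
  let ?g = "inv_into (labels P) h"
  show "bij_betw ?g (labels (rename h P)) (labels P)"
    using bij_betw_inv_into[OF inj_on_imp_bij_betw[OF h]] by simp
  have cancel: "image_mset ?g ` image_mset h ` C = C" if "\<forall>M\<in>C. set_mset M \<subseteq> labels P" for C
    using that image_mset_inv_into_cancel[OF h] by (force simp: image_image)
  show "image_mset ?g ` nodeC (rename h P) = nodeC P" "image_mset ?g ` edgeC (rename h P) = edgeC P"
    using wf cancel by (simp_all add: wf_problem_def)
qed

theorem mainTheorem16:
  fixes k :: nat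
  shows "iso_problem ((Q ^^ k) SSO) (target k)"
proof -
  obtain h where "inj_on h (labels (target k))" "(Q ^^ k) SSO = rename h (target k)"
    using Q_power_SSO by blast
  then show ?thesis using iso_problem_rename[OF wf_target] by simp
qed

end
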